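(* Let $I=(N,O,\succsim)$ be a general instance and $p$ a generalized deterministic matching, with associated deterministic matching $p'$ for the associated instance $I'$. Then $p$ is weakly stable if and only if $p'$ is weakly stable.
   Context: General instance: $N=\{1,\dots,n\}$ agents, $O=\{o_1,\dots,o_m\}$ objects ($m,n\ge1$ arbitrary), $\emptyset$ the null object. Each agent $i$ has a weak order $\succsim_i$ over $O\cup\{\emptyset\}$ and each object $o$ a weak order $\succsim_o$ over $N\cup\{\emptyset\}$, with either $o\succ_i\emptyset$ or $\emptyset\succ_i o$, and either $i\succ_o\emptyset$ or $\emptyset\succ_o i$. $(i,o)$ is an acceptable pair if $o\succ_i\emptyset$ and $i\succ_o\emptyset$. A generalized deterministic matching is an $n\times m$ $\{0,1\}$-matrix with at most one $1$ per row and column. $p$ is individually rational if $p(i,o)=0$ whenever $\emptyset\succ_i o$ or $\emptyset\succ_o i$. $p$ is weakly stable if it is individually rational and there is no acceptable pair $(i,o)$ with $\sum_{o':o'\succsim_i o}p(i,o')=0$ and $\sum_{j:j\succsim_o i}p(j,o)=0$. Associated instance: $D=\{d_1,\dots,d_m\}$, $\Phi=\{\phi_1,\dots,\phi_n\}$, $N'=N\cup D$, $O'=O\cup\Phi$. Weak orders $\succsim'$ (blocks from best to worst, consecutive blocks strictly ordered): for $i\in N$: objects acceptable to $i$ ordered by $\succsim_i$, then $\phi_i$, then $\phi_k$ ($k\ne i$) in increasing index, then objects unacceptable to $i$ ordered by $\succsim_i$; for $o_j$: agents acceptable to $o_j$ ordered by $\succsim_{o_j}$, then $d_j$, then $d_k$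 ($k\ne j$) in increasing index, then agents unacceptable to $o_j$ ordered by $\succsim_{o_j}$; for $d_j$: $o_j$, then the other objects of $O$ in increasing index, then null objects with $\phi_k\succsim'_{d_j}\phi_l$ iff $k\succsim_{o_j}l$; for $\phi_i$: $i$, then other agents of $N$ in increasing index, then dummies with $d_k\succsim'_{\phi_i}d_l$ iff $o_k\succsim_i o_l$. The associated matching $p'$: $p'(i,o_j)=p(i,o_j)$, $p'(d_j,\phi_i)=p(i,o_j)$, $p'(i,\phi_i)=1-\sum_{o}p(i,o)$, $p'(d_j,o_j)=1-\sum_{i}p(i,o_j)$, all other entries $0$. A deterministic matching $q$ for $I'$ is weakly stable if there are no $a,b\in N'$, $c,c'\in O'$ with $q(a,c')=1$, $q(b,c)=1$, $c\succ'_a c'$, $a\succ'_c b$. *)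

theory Defs
  imports Main
begin

text \<open>A preference of an agent over
  O \<union> {null} is a relation on nat option (None = null object);
  likewise for objects over N \<union> {null}.  R x y means x is weakly preferred to y.\<close>

definition weak_order_on :: "'a set \<Rightarrow> ('a \<Rightarrow> 'a \<Rightarrow> bool) \<Rightarrow> bool" where
  "weak_order_on A R \<longleftrightarrow>
     (\<forall>x\<in>A. \<forall>y\<in>A. R x y \<or> R y x) \<and>
     (\<forall>x\<in>A. \<forall>y\<in>A. \<forall>z\<in>A. R x y \<longrightarrow> R y z \<longrightarrow> R x z)"

definition strict :: "('a \<Rightarrow> 'a \<Rightarrow> bool) \<Rightarrow> 'a \<Rightarrow> 'a \<Rightarrow> bool" where
  "strict R x y \<longleftrightarrow> R x y \<and> \<not> R y x"

definition general_instance ::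
  "nat \<Rightarrow> nat \<Rightarrow> (nat \<Rightarrow> nat option \<Rightarrow> nat option \<Rightarrow> bool)
       \<Rightarrow> (nat \<Rightarrow> nat option \<Rightarrow> nat option \<Rightarrow> bool) \<Rightarrow> bool" where
  "general_instance n m PA PO \<longleftrightarrow>
     (\<forall>i\<in>{1..n}. weak_order_on (Some ` {1..m} \<union> {None}) (PA i) \<and>
        (\<forall>ob\<in>{1..m}. strict (PA i) (Some ob) None \<or> strict (PA i) None (Some ob))) \<and>
     (\<forall>ob\<in>{1..m}. weak_order_on (Some ` {1..n} \<union> {None}) (PO ob) \<and>
        (\<forall>i\<in>{1..n}. strict (PO ob) (Some i) None \<or> strict (PO ob) None (Some i)))"

definition acceptable ::
  "(nat \<Rightarrow> nat option \<Rightarrow> nat option \<Rightarrow> bool) \<Rightarrow> (nat \<Rightarrow> nat option \<Rightarrow> nat option \<Rightarrow> bool)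
     \<Rightarrow> nat \<Rightarrow> nat \<Rightarrow> bool" where
  "acceptable PA PO i ob \<longleftrightarrow> strict (PA i) (Some ob) None \<and> strict (PO ob) (Some i) None"

definition gen_det_matching :: "nat \<Rightarrow> nat \<Rightarrow> (nat \<Rightarrow> nat \<Rightarrow> nat) \<Rightarrow> bool" where
  "gen_det_matching n m p \<longleftrightarrow>
     (\<forall>i\<in>{1..n}. \<forall>j\<in>{1..m}. p i j \<in> {0, 1}) \<and>
     (\<forall>i\<in>{1..n}. card {j\<in>{1..m}. p i j = 1} \<le> 1) \<and>
     (\<forall>j\<in>{1..m}. card {i\<in>{1..n}. p i j = 1} \<le> 1)"

definition individually_rational ::
  "nat \<Rightarrow> nat \<Rightarrow> (nat \<Rightarrow> nat option \<Rightarrow> nat option \<Rightarrow> bool)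
       \<Rightarrow> (nat \<Rightarrow> nat option \<Rightarrow> nat option \<Rightarrow> bool) \<Rightarrow> (nat \<Rightarrow> nat \<Rightarrow> nat) \<Rightarrow> bool" where
  "individually_rational n m PA PO p \<longleftrightarrow>
     (\<forall>i\<in>{1..n}. \<forall>ob\<in>{1..m}.
        (strict (PA i) None (Some ob) \<or> strict (PO ob) None (Some i)) \<longrightarrow> p i ob = 0)"

definition weakly_stable ::
  "nat \<Rightarrow> nat \<Rightarrow> (nat \<Rightarrow> nat option \<Rightarrow> nat option \<Rightarrow> bool)
       \<Rightarrow> (nat \<Rightarrow> nat option \<Rightarrow> nat option \<Rightarrow> bool) \<Rightarrow> (nat \<Rightarrow> nat \<Rightarrow> nat) \<Rightarrow> bool" where
  "weakly_stable n m PA PO p \<longleftrightarrow>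
     individually_rational n m PA PO p \<and>
     \<not> (\<exists>i\<in>{1..n}. \<exists>ob\<in>{1..m}. acceptable PA PO i ob \<and>
          (\<Sum>ob'\<in>{ob'\<in>{1..m}. PA i (Some ob') (Some ob)}. p i ob') = 0 \<and>
          (\<Sum>j\<in>{j\<in>{1..n}. PO ob (Some j) (Some i)}. p j ob) = 0)"

text \<open>Ag i = agent i, Dm j = dummy agent d_j; Ob j = object o_j, Ph i = null object phi_i.\<close>
datatype agent' = Ag nat | Dm nat
datatype object' = Ob nat | Ph nat

definition N' :: "nat \<Rightarrow> nat \<Rightarrow> agent' set" where
  "N' n m = Ag ` {1..n} \<union> Dm ` {1..m}"

definition O' :: "nat \<Rightarrow> nat \<Rightarrow> object' set" where
  "O' n m = Ob ` {1..m} \<union> Ph ` {1..n}"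

definition lexpref :: "('a \<Rightarrow> nat) \<Rightarrow> ('a \<Rightarrow> 'a \<Rightarrow> bool) \<Rightarrow> 'a \<Rightarrow> 'a \<Rightarrow> bool" where
  "lexpref blk W x y \<longleftrightarrow> blk x < blk y \<or> (blk x = blk y \<and> W x y)"

fun agent_block :: "(nat \<Rightarrow> nat option \<Rightarrow> nat option \<Rightarrow> bool) \<Rightarrow> agent' \<Rightarrow> object' \<Rightarrow> nat" where
  "agent_block PA (Ag i) (Ob ob) = (if strict (PA i) (Some ob) None then 0 else 3)"
| "agent_block PA (Ag i) (Ph k) = (if k = i then 1 else 2)"
| "agent_block PA (Dm j) (Ob ob) = (if ob = j then 0 else 1)"
| "agent_block PA (Dm j) (Ph k) = 2"

fun agent_within ::
  "(nat \<Rightarrow> nat option \<Rightarrow> nat option \<Rightarrow> bool) \<Rightarrow> (nat \<Rightarrow> nat option \<Rightarrow> nat option \<Rightarrow> bool)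
     \<Rightarrow> agent' \<Rightarrow> object' \<Rightarrow> object' \<Rightarrow> bool" where
  "agent_within PA PO (Ag i) (Ob ob) (Ob ob') = PA i (Some ob) (Some ob')"
| "agent_within PA PO (Ag i) (Ph k) (Ph l) = (k \<le> l)"
| "agent_within PA PO (Dm j) (Ob ob) (Ob ob') = (ob \<le> ob')"
| "agent_within PA PO (Dm j) (Ph k) (Ph l) = PO j (Some k) (Some l)"
| "agent_within PA PO a x y = False"

definition assoc_agent_pref ::
  "(nat \<Rightarrow> nat option \<Rightarrow> nat option \<Rightarrow> bool) \<Rightarrow> (nat \<Rightarrow> nat option \<Rightarrow> nat option \<Rightarrow> bool)
     \<Rightarrow> agent' \<Rightarrow> object' \<Rightarrow> object' \<Rightarrow> bool" where
  "assoc_agent_pref PA PO a = lexpref (agent_block PA a) (agent_within PA PO a)"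

fun object_block :: "(nat \<Rightarrow> nat option \<Rightarrow> nat option \<Rightarrow> bool) \<Rightarrow> object' \<Rightarrow> agent' \<Rightarrow> nat" where
  "object_block PO (Ob j) (Ag i) = (if strict (PO j) (Some i) None then 0 else 3)"
| "object_block PO (Ob j) (Dm k) = (if k = j then 1 else 2)"
| "object_block PO (Ph i) (Ag k) = (if k = i then 0 else 1)"
| "object_block PO (Ph i) (Dm k) = 2"

fun object_within ::
  "(nat \<Rightarrow> nat option \<Rightarrow> nat option \<Rightarrow> bool) \<Rightarrow> (nat \<Rightarrow> nat option \<Rightarrow> nat option \<Rightarrow> bool)
     \<Rightarrow> object' \<Rightarrow> agent' \<Rightarrow> agent' \<Rightarrow> bool" where
  "object_within PA PO (Ob j) (Ag i) (Ag i') = PO j (Some i) (Some i')"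
| "object_within PA PO (Ob j) (Dm k) (Dm l) = (k \<le> l)"
| "object_within PA PO (Ph i) (Ag k) (Ag l) = (k \<le> l)"
| "object_within PA PO (Ph i) (Dm k) (Dm l) = PA i (Some k) (Some l)"
| "object_within PA PO c x y = False"

definition assoc_object_pref ::
  "(nat \<Rightarrow> nat option \<Rightarrow> nat option \<Rightarrow> bool) \<Rightarrow> (nat \<Rightarrow> nat option \<Rightarrow> nat option \<Rightarrow> bool)
     \<Rightarrow> object' \<Rightarrow> agent' \<Rightarrow> agent' \<Rightarrow> bool" where
  "assoc_object_pref PA PO c = lexpref (object_block PO c) (object_within PA PO c)"

fun assoc_matching :: "nat \<Rightarrow> nat \<Rightarrow> (nat \<Rightarrow> nat \<Rightarrow> nat) \<Rightarrow> agent' \<Rightarrow> object' \<Rightarrow> nat" where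
  "assoc_matching n m p (Ag i) (Ob j) = p i j"
| "assoc_matching n m p (Dm j) (Ph i) = p i j"
| "assoc_matching n m p (Ag i) (Ph k) = (if k = i then 1 - (\<Sum>ob=1..m. p i ob) else 0)"
| "assoc_matching n m p (Dm j) (Ob k) = (if k = j then 1 - (\<Sum>i=1..n. p i j) else 0)"

definition weakly_stable_det ::
  "agent' set \<Rightarrow> object' set \<Rightarrow> (agent' \<Rightarrow> object' \<Rightarrow> object' \<Rightarrow> bool)
     \<Rightarrow> (object' \<Rightarrow> agent' \<Rightarrow> agent' \<Rightarrow> bool) \<Rightarrow> (agent' \<Rightarrow> object' \<Rightarrow> nat) \<Rightarrow> bool" where
  "weakly_stable_det AS OS RA RO q \<longleftrightarrow>
     \<not> (\<exists>a\<in>AS. \<exists>b\<in>AS. \<exists>c\<in>OS. \<exists>c'\<in>OS.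
          q a c' = 1 \<and> q b c = 1 \<and> strict (RA a) c c' \<and> strict (RO c) a b)"

end

theory Submission
  imports Defs
begin

text \<open>A blocking pair of the associated instance either consists of a real agent and a
  real object, and is then a blocking pair of the original instance, or of a dummy d_j and a
  null object phi_k.  In the latter case d_j holds phi_i where i is matched to o_j, phi_k is
  held by d_j' where k is matched to o_j', and the preferences k > i at o_j and o_j > o_j' at k
  make (k, o_j) block p.  All other combinations are ruled out by individual rationality,
  which in turn is forced by stability of p' through the pairs (i, phi_i) and (d_j, o_j).\<close>

lemma strict_trans_on:
  assumes "weak_order_on A R" "x \<in> A" "y \<in> A" "z \<in> A" "strict R x y" "strict R y z"
  shows "strict R x z"
  using assms unfolding weak_order_on_def strict_def by metis

lemma sum_weakly_preferred_eq_0_iff: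
  fixes f :: "'a \<Rightarrow> nat"
  assumes "finite A" "y \<in> A" "\<forall>x\<in>A. f x \<in> {0, 1}" "\<forall>x\<in>A. R (g x) (g y) \<or> R (g y) (g x)"
  shows "(\<Sum>x\<in>{x\<in>A. R (g x) (g y)}. f x) = 0 \<longleftrightarrow> (\<forall>x\<in>A. f x = 1 \<longrightarrow> strict R (g y) (g x))"
  using assms by (auto simp: strict_def)

lemma one_minus_sum_eq_1_iff:
  fixes f :: "'a \<Rightarrow> nat"
  assumes "finite A" "\<forall>x\<in>A. f x \<in> {0, 1}"
  shows "1 - (\<Sum>x\<in>A. f x) = 1 \<longleftrightarrow> (\<forall>x\<in>A. f x \<noteq> 1)"
proof -
  have "1 - (\<Sum>x\<in>A. f x) = 1 \<longleftrightarrow> (\<Sum>x\<in>A. f x) = 0" by arith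
  also have "\<dots> \<longleftrightarrow> (\<forall>x\<in>A. f x \<noteq> 1)" using assms by auto
  finally show ?thesis .
qed

lemma card_le_1_eq:
  assumes "card {x\<in>A. P x} \<le> 1" "finite A" "x \<in> A" "y \<in> A" "P x" "P y"
  shows "x = y"
  using assms card_le_Suc0_iff_eq[of "{x\<in>A. P x}"] by auto

locale matching_instance =
  fixes n m :: nat and PA PO :: "nat \<Rightarrow> nat option \<Rightarrow> nat option \<Rightarrow> bool"
    and p :: "nat \<Rightarrow> nat \<Rightarrow> nat"
  assumes inst: "general_instance n m PA PO" and matching: "gen_det_matching n m p"
begin

abbreviation "q \<equiv> assoc_matching n m p"
abbreviation "RA \<equiv> assoc_agent_pref PA PO"
abbreviation "RO \<equiv> assoc_object_pref PA PO"

lemmas assoc_pref_defs = strict_def assoc_agent_pref_def assoc_object_pref_def lexpref_def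

definition agent_prefers_to_match :: "nat \<Rightarrow> nat \<Rightarrow> bool" where
  "agent_prefers_to_match i j \<longleftrightarrow>
     (\<forall>j'\<in>{1..m}. p i j' = 1 \<longrightarrow> strict (PA i) (Some j) (Some j'))"

definition object_prefers_to_match :: "nat \<Rightarrow> nat \<Rightarrow> bool" where
  "object_prefers_to_match j i \<longleftrightarrow>
     (\<forall>k\<in>{1..n}. p k j = 1 \<longrightarrow> strict (PO j) (Some i) (Some k))"

definition blocking_pair :: "nat \<Rightarrow> nat \<Rightarrow> bool" where
  "blocking_pair i j \<longleftrightarrow>
     acceptable PA PO i j \<and> agent_prefers_to_match i j \<and> object_prefers_to_match j i"

lemma agent_weak_order: "i \<in> {1..n} \<Longrightarrow> weak_order_on (Some ` {1..m} \<union> {None}) (PA i)"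
  and object_weak_order: "j \<in> {1..m} \<Longrightarrow> weak_order_on (Some ` {1..n} \<union> {None}) (PO j)"
  using inst unfolding general_instance_def by blast+

lemma matching_01: "i \<in> {1..n} \<Longrightarrow> j \<in> {1..m} \<Longrightarrow> p i j \<in> {0, 1}"
  using matching unfolding gen_det_matching_def by blast

lemma row_unique:
  assumes "i \<in> {1..n}" "j \<in> {1..m}" "j' \<in> {1..m}" "p i j = 1" "p i j' = 1"
  shows "j = j'"
proof (rule card_le_1_eq[of "{1..m}" "\<lambda>j. p i j = 1"])
  show "card {j \<in> {1..m}. p i j = 1} \<le> 1"
    using matching assms(1) unfolding gen_det_matching_def by blast
qed (use assms in auto)

lemma column_unique:
  assumes "i \<in> {1..n}" "i' \<in> {1..n}" "j \<in> {1..m}" "p i j = 1" "p i' j = 1"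
  shows "i = i'"
proof (rule card_le_1_eq[of "{1..n}" "\<lambda>i. p i j = 1"])
  show "card {i \<in> {1..n}. p i j = 1} \<le> 1"
    using matching assms(3) unfolding gen_det_matching_def by blast
qed (use assms in auto)

lemma assoc_matching_Ag_Ph_eq_1:
  "i \<in> {1..n} \<Longrightarrow> q (Ag i) (Ph k) = 1 \<longleftrightarrow> k = i \<and> (\<forall>j\<in>{1..m}. p i j \<noteq> 1)"
  using one_minus_sum_eq_1_iff[of "{1..m}" "p i"] matching_01 by auto

lemma assoc_matching_Dm_Ob_eq_1:
  "j \<in> {1..m} \<Longrightarrow> q (Dm j) (Ob k) = 1 \<longleftrightarrow> k = j \<and> (\<forall>i\<in>{1..n}. p i j \<noteq> 1)"
  using one_minus_sum_eq_1_iff[of "{1..n}" "\<lambda>i. p i j"] matching_01 by auto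

lemma agent_accepts_or_rejects:
  "\<lbrakk>i \<in> {1..n}; j \<in> {1..m}\<rbrakk> \<Longrightarrow> strict (PA i) (Some j) None \<or> strict (PA i) None (Some j)"
  and object_accepts_or_rejects:
  "\<lbrakk>i \<in> {1..n}; j \<in> {1..m}\<rbrakk> \<Longrightarrow> strict (PO j) (Some i) None \<or> strict (PO j) None (Some i)"
  using inst unfolding general_instance_def by blast+

lemma matched_pair_acceptable:
  assumes "individually_rational n m PA PO p" "i \<in> {1..n}" "j \<in> {1..m}" "p i j = 1"
  shows "acceptable PA PO i j"
proof -
  have "\<not> strict (PA i) None (Some j)" "\<not> strict (PO j) None (Some i)"
    using assms unfolding individually_rational_def by auto
  then show ?thesis
    using agent_accepts_or_rejects[OF assms(2,3)] object_accepts_or_rejects[OF assms(2,3)]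
    unfolding acceptable_def by blast
qed

lemma agent_total: "\<lbrakk>i \<in> {1..n}; j \<in> {1..m}; j' \<in> {1..m}\<rbrakk> \<Longrightarrow>
    PA i (Some j) (Some j') \<or> PA i (Some j') (Some j)"
  using agent_weak_order unfolding weak_order_on_def by blast

lemma object_total: "\<lbrakk>j \<in> {1..m}; i \<in> {1..n}; i' \<in> {1..n}\<rbrakk> \<Longrightarrow>
    PO j (Some i) (Some i') \<or> PO j (Some i') (Some i)"
  using object_weak_order unfolding weak_order_on_def by blast

lemma weakly_stable_iff:
  "weakly_stable n m PA PO p \<longleftrightarrow> individually_rational n m PA PO p \<and>
     \<not> (\<exists>i\<in>{1..n}. \<exists>j\<in>{1..m}. blocking_pair i j)"
proof -
  have "(\<Sum>j'\<in>{j'\<in>{1..m}. PA i (Some j') (Some j)}. p i j') = 0 \<longleftrightarrow>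
          agent_prefers_to_match i j"
    if "i \<in> {1..n}" "j \<in> {1..m}" for i j
    unfolding agent_prefers_to_match_def
    by (rule sum_weakly_preferred_eq_0_iff[of "{1..m}" j "p i" "PA i" Some])
      (use that matching_01 agent_total in auto)
  moreover have "(\<Sum>k\<in>{k\<in>{1..n}. PO j (Some k) (Some i)}. p k j) = 0 \<longleftrightarrow>
          object_prefers_to_match j i"
    if "i \<in> {1..n}" "j \<in> {1..m}" for i j
    unfolding object_prefers_to_match_def
    by (rule sum_weakly_preferred_eq_0_iff[of "{1..n}" i "\<lambda>k. p k j" "PO j" Some])
      (use that matching_01 object_total in auto)
  ultimately show ?thesis unfolding weakly_stable_def blocking_pair_def by blast
qed

lemma agent_envies_object_iff:
  assumes IR: "individually_rational n m PA PO p" and i: "i \<in> {1..n}" and j: "j \<in> {1..m}"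
  shows "(\<exists>c'\<in>O' n m. q (Ag i) c' = 1 \<and> strict (RA (Ag i)) (Ob j) c') \<longleftrightarrow>
         strict (PA i) (Some j) None \<and> agent_prefers_to_match i j"
    (is "?envy \<longleftrightarrow> ?acc \<and> _")
  unfolding agent_prefers_to_match_def
proof
  assume ?envy
  then obtain c' where c': "c' \<in> O' n m" "q (Ag i) c' = 1" "strict (RA (Ag i)) (Ob j) c'"
    by blast
  show "?acc \<and> (\<forall>j'\<in>{1..m}. p i j' = 1 \<longrightarrow> strict (PA i) (Some j) (Some j'))"
  proof (cases c')
    case (Ob j')
    with c' have j': "j' \<in> {1..m}" "p i j' = 1" by (auto simp: O'_def)
    then have "strict (PA i) (Some j') None"
      using matched_pair_acceptable[OF IR i] by (simp add: acceptable_def)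
    with c' Ob have "?acc \<and> strict (PA i) (Some j) (Some j')"
      by (auto simp: assoc_pref_defs split: if_splits)
    with j' show ?thesis using row_unique[OF i] by blast
  next
    case (Ph k)
    with c' have "k = i" "\<forall>j'\<in>{1..m}. p i j' \<noteq> 1"
      using assoc_matching_Ag_Ph_eq_1[OF i] by auto
    with c' Ph show ?thesis by (auto simp: assoc_pref_defs split: if_splits)
  qed
next
  assume acc_dom: "?acc \<and> (\<forall>j'\<in>{1..m}. p i j' = 1 \<longrightarrow> strict (PA i) (Some j) (Some j'))"
  show ?envy
  proof (cases "\<exists>j'\<in>{1..m}. p i j' = 1")
    case True
    then obtain j' where "j' \<in> {1..m}" "p i j' = 1" by blast
    with acc_dom show ?thesis by (intro bexI[of _ "Ob j'"]) (auto simp: O'_def assoc_pref_defs)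
  next
    case False
    then have "q (Ag i) (Ph i) = 1" using assoc_matching_Ag_Ph_eq_1[OF i] by blast
    with acc_dom i show ?thesis by (intro bexI[of _ "Ph i"]) (auto simp: O'_def assoc_pref_defs)
  qed
qed

lemma object_prefers_agent_iff:
  assumes IR: "individually_rational n m PA PO p" and i: "i \<in> {1..n}" and j: "j \<in> {1..m}"
  shows "(\<exists>b\<in>N' n m. q b (Ob j) = 1 \<and> strict (RO (Ob j)) (Ag i) b) \<longleftrightarrow>
         strict (PO j) (Some i) None \<and> object_prefers_to_match j i"
    (is "?envy \<longleftrightarrow> ?acc \<and> _")
  unfolding object_prefers_to_match_def
proof
  assume ?envy
  then obtain b where b: "b \<in> N' n m" "q b (Ob j) = 1" "strict (RO (Ob j)) (Ag i) b"
    by blast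
  show "?acc \<and> (\<forall>k\<in>{1..n}. p k j = 1 \<longrightarrow> strict (PO j) (Some i) (Some k))"
  proof (cases b)
    case (Ag k)
    with b have k: "k \<in> {1..n}" "p k j = 1" by (auto simp: N'_def)
    then have "strict (PO j) (Some k) None"
      using matched_pair_acceptable[OF IR _ j] by (simp add: acceptable_def)
    with b Ag have "?acc \<and> strict (PO j) (Some i) (Some k)"
      by (auto simp: assoc_pref_defs split: if_splits)
    with k show ?thesis using column_unique[OF _ _ j] by blast
  next
    case (Dm l)
    with b have "l \<in> {1..m}" by (auto simp: N'_def)
    with b Dm have "l = j" "\<forall>k\<in>{1..n}. p k j \<noteq> 1"
      using assoc_matching_Dm_Ob_eq_1 by auto
    with b Dm show ?thesis by (auto simp: assoc_pref_defs split: if_splits)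
  qed
next
  assume acc_dom: "?acc \<and> (\<forall>k\<in>{1..n}. p k j = 1 \<longrightarrow> strict (PO j) (Some i) (Some k))"
  show ?envy
  proof (cases "\<exists>k\<in>{1..n}. p k j = 1")
    case True
    then obtain k where "k \<in> {1..n}" "p k j = 1" by blast
    with acc_dom show ?thesis by (intro bexI[of _ "Ag k"]) (auto simp: N'_def assoc_pref_defs)
  next
    case False
    then have "q (Dm j) (Ob j) = 1" using assoc_matching_Dm_Ob_eq_1[OF j] by blast
    with acc_dom j show ?thesis by (intro bexI[of _ "Dm j"]) (auto simp: N'_def assoc_pref_defs)
  qed
qed

lemma agent_not_envies_null:
  assumes "individually_rational n m PA PO p" "i \<in> {1..n}" "c' \<in> O' n m" "q (Ag i) c' = 1"
  shows "\<not> strict (RA (Ag i)) (Ph k) c'"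
proof (cases c')
  case (Ob j')
  with assms have "acceptable PA PO i j'" by (auto simp: O'_def intro: matched_pair_acceptable)
  with Ob show ?thesis by (auto simp: acceptable_def assoc_pref_defs)
next
  case (Ph k')
  with assms have "k' = i" using assoc_matching_Ag_Ph_eq_1 by simp
  with Ph show ?thesis by (auto simp: assoc_pref_defs)
qed

lemma object_not_prefers_dummy:
  assumes "individually_rational n m PA PO p" "j \<in> {1..m}" "b \<in> N' n m" "q b (Ob j) = 1"
  shows "\<not> strict (RO (Ob j)) (Dm l) b"
proof (cases b)
  case (Ag k)
  with assms have "acceptable PA PO k j" by (auto simp: N'_def intro: matched_pair_acceptable)
  with Ag show ?thesis by (auto simp: acceptable_def assoc_pref_defs)
next
  case (Dm l')
  with assms have "l' \<in> {1..m}" by (auto simp: N'_def)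
  with assms Dm have "l' = j" using assoc_matching_Dm_Ob_eq_1 by simp
  with Dm show ?thesis by (auto simp: assoc_pref_defs)
qed

lemma dummy_envies_null:
  assumes j: "j \<in> {1..m}" and c': "c' \<in> O' n m" "q (Dm j) c' = 1"
    and envy: "strict (RA (Dm j)) (Ph k) c'"
  shows "\<exists>i\<in>{1..n}. p i j = 1 \<and> strict (PO j) (Some k) (Some i)"
proof (cases c')
  case (Ob l)
  with c' have "l = j" using assoc_matching_Dm_Ob_eq_1[OF j] by blast
  with Ob envy show ?thesis by (auto simp: assoc_pref_defs)
next
  case (Ph i)
  with c' have "i \<in> {1..n}" "p i j = 1" by (auto simp: O'_def)
  moreover from envy Ph have "strict (PO j) (Some k) (Some i)" by (simp add: assoc_pref_defs)
  ultimately show ?thesis by blast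
qed

lemma null_prefers_dummy:
  assumes k: "k \<in> {1..n}" and b: "b \<in> N' n m" "q b (Ph k) = 1"
    and pref: "strict (RO (Ph k)) (Dm j) b"
  shows "\<exists>j'\<in>{1..m}. p k j' = 1 \<and> strict (PA k) (Some j) (Some j')"
proof (cases b)
  case (Ag i)
  with b have "i \<in> {1..n}" by (auto simp: N'_def)
  with b Ag have "k = i" using assoc_matching_Ag_Ph_eq_1 by simp
  with Ag pref show ?thesis by (auto simp: assoc_pref_defs)
next
  case (Dm j')
  with b have "j' \<in> {1..m}" "p k j' = 1" by (auto simp: N'_def)
  moreover from pref Dm have "strict (PA k) (Some j) (Some j')" by (simp add: assoc_pref_defs)
  ultimately show ?thesis by blast
qed

lemma blocking_pair_of_dummy_null_block:
  assumes IR: "individually_rational n m PA PO p" and k: "k \<in> {1..n}" and j: "j \<in> {1..m}"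
    and i: "i \<in> {1..n}" "p i j = 1" "strict (PO j) (Some k) (Some i)"
    and j': "j' \<in> {1..m}" "p k j' = 1" "strict (PA k) (Some j) (Some j')"
  shows "blocking_pair k j"
proof -
  have "strict (PA k) (Some j') None" "strict (PO j) (Some i) None"
    using matched_pair_acceptable[OF IR k j'(1,2)] matched_pair_acceptable[OF IR i(1) j i(2)]
    by (auto simp: acceptable_def)
  then have "strict (PA k) (Some j) None" "strict (PO j) (Some k) None"
    using strict_trans_on[OF agent_weak_order[OF k] _ _ _ j'(3)]
      strict_trans_on[OF object_weak_order[OF j] _ _ _ i(3)] j j' i k by auto
  then show ?thesis
    using row_unique[OF k _ j'(1) _ j'(2)] column_unique[OF _ i(1) j _ i(2)] i(3) j'(3)
    by (auto simp: blocking_pair_def acceptable_def agent_prefers_to_match_def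
        object_prefers_to_match_def)
qed

lemma assoc_weakly_stable_if_weakly_stable:
  assumes "weakly_stable n m PA PO p"
  shows "weakly_stable_det (N' n m) (O' n m) RA RO q"
  unfolding weakly_stable_det_def
proof clarify
  fix a b c c'
  assume a: "a \<in> N' n m" and b: "b \<in> N' n m" and c: "c \<in> O' n m" and c': "c' \<in> O' n m"
    and qa: "q a c' = 1" and qb: "q b c = 1"
    and envy: "strict (RA a) c c'" and pref: "strict (RO c) a b"
  have IR: "individually_rational n m PA PO p"
    and no_block: "\<And>i j. \<lbrakk>i \<in> {1..n}; j \<in> {1..m}\<rbrakk> \<Longrightarrow> \<not> blocking_pair i j"
    using assms unfolding weakly_stable_iff by blast+
  show False
  proof (cases a; cases c)
    fix i j assume ac: "a = Ag i" "c = Ob j"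
    have i: "i \<in> {1..n}" and j: "j \<in> {1..m}" using a c ac by (auto simp: N'_def O'_def)
    have "strict (PA i) (Some j) None \<and> agent_prefers_to_match i j"
      using agent_envies_object_iff[OF IR i j] c' qa envy ac by auto
    moreover have "strict (PO j) (Some i) None \<and> object_prefers_to_match j i"
      using object_prefers_agent_iff[OF IR i j] b qb pref ac by auto
    ultimately show False using no_block[OF i j] by (simp add: blocking_pair_def acceptable_def)
  next
    fix i k assume "a = Ag i" "c = Ph k"
    then show False using agent_not_envies_null[OF IR _ c'] a qa envy by (auto simp: N'_def)
  next
    fix j l assume "a = Dm j" "c = Ob l"
    then show False using object_not_prefers_dummy[OF IR _ b] c qb pref by (auto simp: O'_def)
  next
    fix j k assume ac: "a = Dm j" "c = Ph k"
    have k: "k \<in> {1..n}" and j: "j \<in> {1..m}" using a c ac by (auto simp: N'_def O'_def)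
    obtain i where "i \<in> {1..n}" "p i j = 1" "strict (PO j) (Some k) (Some i)"
      using dummy_envies_null[OF j c' qa[unfolded ac] envy[unfolded ac]] by blast
    moreover obtain j' where "j' \<in> {1..m}" "p k j' = 1" "strict (PA k) (Some j) (Some j')"
      using null_prefers_dummy[OF k b qb[unfolded ac] pref[unfolded ac]] by blast
    ultimately show False
      using blocking_pair_of_dummy_null_block[OF IR k j] no_block[OF k j] by blast
  qed
qed

lemma weakly_stable_if_assoc_weakly_stable:
  assumes "weakly_stable_det (N' n m) (O' n m) RA RO q"
  shows "weakly_stable n m PA PO p"
proof -
  have no_block: False
    if "a \<in> N' n m" "b \<in> N' n m" "c \<in> O' n m" "c' \<in> O' n m" "q a c' = 1" "q b c = 1"
       "strict (RA a) c c'" "strict (RO c) a b" for a b c c'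
    using assms that unfolding weakly_stable_det_def by blast
  have IR: "individually_rational n m PA PO p"
    unfolding individually_rational_def
  proof (intro ballI impI)
    fix i j assume i: "i \<in> {1..n}" and j: "j \<in> {1..m}"
      and unacceptable: "strict (PA i) None (Some j) \<or> strict (PO j) None (Some i)"
    show "p i j = 0"
    proof (rule ccontr)
      assume "p i j \<noteq> 0"
      then have pij: "p i j = 1" using matching_01[OF i j] by simp
      show False
      proof (cases "strict (PA i) None (Some j)")
        case True
        show False by (rule no_block[of "Ag i" "Dm j" "Ph i" "Ob j"])
          (use i j pij True in \<open>auto simp: N'_def O'_def assoc_pref_defs\<close>)
      next
        case False
        show False by (rule no_block[of "Dm j" "Ag i" "Ob j" "Ph i"])
          (use i j pij False unacceptable in \<open>auto simp: N'_def O'_def assoc_pref_defs\<close>)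
      qed
    qed
  qed
  moreover have False if i: "i \<in> {1..n}" and j: "j \<in> {1..m}" and "blocking_pair i j" for i j
  proof -
    have "strict (PA i) (Some j) None \<and> agent_prefers_to_match i j"
      "strict (PO j) (Some i) None \<and> object_prefers_to_match j i"
      using \<open>blocking_pair i j\<close> by (auto simp: blocking_pair_def acceptable_def)
    then obtain c' b where "c' \<in> O' n m" "q (Ag i) c' = 1" "strict (RA (Ag i)) (Ob j) c'"
      and "b \<in> N' n m" "q b (Ob j) = 1" "strict (RO (Ob j)) (Ag i) b"
      using agent_envies_object_iff[OF IR i j] object_prefers_agent_iff[OF IR i j] by blast
    moreover have "Ag i \<in> N' n m" "Ob j \<in> O' n m" using i j by (auto simp: N'_def O'_def)
    ultimately show False using no_block by blast
  qed
  ultimately show ?thesis unfolding weakly_stable_iff by blast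
qed

end

theorem proposition22:
  fixes n m :: nat
    and PA PO :: "nat \<Rightarrow> nat option \<Rightarrow> nat option \<Rightarrow> bool"
    and p :: "nat \<Rightarrow> nat \<Rightarrow> nat"
  assumes "n \<ge> 1" and "m \<ge> 1"
    and "general_instance n m PA PO"
    and "gen_det_matching n m p"
  shows "weakly_stable n m PA PO p \<longleftrightarrow>
         weakly_stable_det (N' n m) (O' n m) (assoc_agent_pref PA PO) (assoc_object_pref PA PO)
           (assoc_matching n m p)"
proof -
  interpret matching_instance n m PA PO p
    using assms(3,4) by unfold_locales
  show ?thesis
    using assoc_weakly_stable_if_weakly_stable weakly_stable_if_assoc_weakly_stable by blast
qed

end
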